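(* Let $G$ be a cubic graph and let $J_1,J_2,J_3$ be three joins of $G$. For $i\in\{0,1,2,3\}$ let $E_i$ be the set of edges of $G$ contained in precisely $i$ of the sets $J_1,J_2,J_3$. Then $$|E_0|+\sum_{i=1}^3 n(J_i)=|E_2|+2|E_3|.$$
   Context: A join of a graph $H$ is a set $J\subseteq E(H)$ such that every vertex has degree of the same parity in $H$ and in the spanning subgraph $(V(H),J)$. In a cubic graph every vertex thus has degree $1$ or $3$ in a join $J$; a vertex of degree $3$ in $J$ is called a $J$-vertex, and $n(J)$ denotes the number of $J$-vertices. *)

theory Defs
  imports Main
begin

text \<open>A finite loopless multigraph: vertex set V, edge set E, and an incidence map
  assigning to each edge its set of two distinct endpoints (parallel edges allowed).\<close>
definition multigraph :: "'v set \<Rightarrow> 'e set \<Rightarrow> ('e \<Rightarrow> 'v set) \<Rightarrow> bool" where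
  "multigraph V E ends \<longleftrightarrow> finite V \<and> finite E \<and>
     (\<forall>e\<in>E. ends e \<subseteq> V \<and> card (ends e) = 2)"

definition deg_in :: "('e \<Rightarrow> 'v set) \<Rightarrow> 'e set \<Rightarrow> 'v \<Rightarrow> nat" where
  "deg_in ends F v = card {e\<in>F. v \<in> ends e}"

definition cubic :: "'v set \<Rightarrow> 'e set \<Rightarrow> ('e \<Rightarrow> 'v set) \<Rightarrow> bool" where
  "cubic V E ends \<longleftrightarrow> multigraph V E ends \<and> (\<forall>v\<in>V. deg_in ends E v = 3)"

definition is_join :: "'v set \<Rightarrow> 'e set \<Rightarrow> ('e \<Rightarrow> 'v set) \<Rightarrow> 'e set \<Rightarrow> bool" where
  "is_join V E ends J \<longleftrightarrow> J \<subseteq> E \<and>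
     (\<forall>v\<in>V. even (deg_in ends J v) = even (deg_in ends E v))"

definition nJ :: "'v set \<Rightarrow> ('e \<Rightarrow> 'v set) \<Rightarrow> 'e set \<Rightarrow> nat" where
  "nJ V ends J = card {v\<in>V. deg_in ends J v = 3}"

definition mult3 :: "'e set \<Rightarrow> 'e set \<Rightarrow> 'e set \<Rightarrow> 'e \<Rightarrow> nat" where
  "mult3 J1 J2 J3 e = (if e \<in> J1 then 1 else 0) + (if e \<in> J2 then 1 else 0) + (if e \<in> J3 then 1 else 0)"

definition Ei :: "'e set \<Rightarrow> 'e set \<Rightarrow> 'e set \<Rightarrow> 'e set \<Rightarrow> nat \<Rightarrow> 'e set" where
  "Ei E J1 J2 J3 i = {e\<in>E. mult3 J1 J2 J3 e = i}"

end

theory Submission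
  imports Defs
begin

text \<open>Double counting of edge--vertex incidences gives 2|J_i| = |V| + 2 n(J_i) for each join, since
  every vertex has degree 1 or 3 in J_i, and 2|E| = 3|V|. Summing the three join equations and
  writing |J_1| + |J_2| + |J_3| = |E_1| + 2|E_2| + 3|E_3| and |E| = |E_0| + |E_1| + |E_2| + |E_3|
  yields the identity.\<close>

lemma multigraph_subset:
  "multigraph V E ends \<Longrightarrow> F \<subseteq> E \<Longrightarrow> multigraph V F ends"
  unfolding multigraph_def by (auto intro: finite_subset)

lemma handshake:
  assumes "multigraph V E ends"
  shows "(\<Sum>v\<in>V. deg_in ends E v) = 2 * card E"
proof -
  have fin: "finite V" "finite E" and ends: "\<And>e. e \<in> E \<Longrightarrow> ends e \<subseteq> V \<and> card (ends e) = 2"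
    using assms by (auto simp: multigraph_def)
  have "(\<Sum>v\<in>V. deg_in ends E v) = (\<Sum>v\<in>V. \<Sum>e\<in>E. if v \<in> ends e then 1 else 0)"
    unfolding deg_in_def using fin by (simp add: sum.inter_filter[symmetric])
  also have "\<dots> = (\<Sum>e\<in>E. \<Sum>v\<in>V. if v \<in> ends e then 1 else 0)"
    by (rule sum.swap)
  also have "\<dots> = (\<Sum>e\<in>E. card (ends e))"
  proof (rule sum.cong)
    fix e assume "e \<in> E"
    then have "{v\<in>V. v \<in> ends e} = ends e" using ends by auto
    then show "(\<Sum>v\<in>V. if v \<in> ends e then 1 else 0) = card (ends e)"
      using fin by (simp add: sum.inter_filter[symmetric])
  qed simp
  also have "\<dots> = 2 * card E"
    using ends by simp
  finally show ?thesis .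
qed

lemma cubic_card_edges:
  "cubic V E ends \<Longrightarrow> 2 * card E = 3 * card V"
  using handshake[of V E ends] by (simp add: cubic_def)

lemma deg_in_mono:
  "finite F \<Longrightarrow> J \<subseteq> F \<Longrightarrow> deg_in ends J v \<le> deg_in ends F v"
  unfolding deg_in_def by (intro card_mono) auto

lemma deg_in_join_cubic:
  assumes "cubic V E ends" and "is_join V E ends J" and "v \<in> V"
  shows "deg_in ends J v = 1 \<or> deg_in ends J v = 3"
proof -
  have "finite E" and deg_E: "deg_in ends E v = 3"
    using assms(1,3) unfolding cubic_def multigraph_def by blast+
  moreover have "J \<subseteq> E" and odd: "odd (deg_in ends J v)"
    using assms(2,3) deg_E unfolding is_join_def by auto
  ultimately have "deg_in ends J v \<le> 3"
    using deg_in_mono by metis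
  with odd show ?thesis
    by (auto elim!: oddE)
qed

lemma card_join_cubic:
  assumes cubic: "cubic V E ends" and join: "is_join V E ends J"
  shows "2 * card J = card V + 2 * nJ V ends J"
proof -
  have "multigraph V E ends" and "J \<subseteq> E"
    using assms unfolding cubic_def is_join_def by blast+
  then have "finite V" and "multigraph V J ends"
    using multigraph_subset unfolding multigraph_def by blast+
  have "2 * card J = (\<Sum>v\<in>V. deg_in ends J v)"
    using handshake[OF \<open>multigraph V J ends\<close>] by simp
  also have "\<dots> = (\<Sum>v\<in>V. 1 + 2 * (if deg_in ends J v = 3 then 1 else 0))"
    using deg_in_join_cubic[OF cubic join] by (intro sum.cong) fastforce+
  also have "\<dots> = card V + 2 * (\<Sum>v\<in>V. if deg_in ends J v = 3 then 1 else 0)"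
    by (simp only: sum.distrib sum_distrib_left[symmetric]) simp
  also have "\<dots> = card V + 2 * nJ V ends J"
    using \<open>finite V\<close> by (simp add: nJ_def sum.inter_filter[symmetric])
  finally show ?thesis .
qed

lemma atMost_3_nat: "{..3::nat} = {0, 1, 2, 3}"
  by auto

lemma mult3_le: "mult3 J1 J2 J3 e \<le> 3"
  by (simp add: mult3_def)

lemma sum_by_Ei:
  assumes "finite E"
  shows "(\<Sum>e\<in>E. h e) = (\<Sum>i\<le>3. \<Sum>e\<in>Ei E J1 J2 J3 i. h e)"
  unfolding Ei_def using assms mult3_le
  by (intro sum.group[symmetric]) auto

lemma card_eq_sum_card_Ei:
  "finite E \<Longrightarrow> card E = card (Ei E J1 J2 J3 0) + card (Ei E J1 J2 J3 1)
     + card (Ei E J1 J2 J3 2) + card (Ei E J1 J2 J3 3)"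
  using sum_by_Ei[of E "\<lambda>_. 1::nat" J1 J2 J3] by (simp add: atMost_3_nat)

lemma sum_card_joins_eq_sum_card_Ei:
  assumes "finite E" and "J1 \<subseteq> E" "J2 \<subseteq> E" "J3 \<subseteq> E"
  shows "card J1 + card J2 + card J3
    = card (Ei E J1 J2 J3 1) + 2 * card (Ei E J1 J2 J3 2) + 3 * card (Ei E J1 J2 J3 3)"
proof -
  have card_sub: "card J = (\<Sum>e\<in>E. if e \<in> J then 1 else 0)" if "J \<subseteq> E" for J
    using that \<open>finite E\<close> by (simp add: sum.inter_filter[symmetric] Int_absorb1[unfolded Int_def])
  have "card J1 + card J2 + card J3 = (\<Sum>e\<in>E. mult3 J1 J2 J3 e)"
    using assms card_sub by (simp add: mult3_def sum.distrib)
  also have "\<dots> = (\<Sum>i\<le>3. \<Sum>e\<in>Ei E J1 J2 J3 i. mult3 J1 J2 J3 e)"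
    using sum_by_Ei \<open>finite E\<close> .
  also have "\<dots> = (\<Sum>i\<le>3. i * card (Ei E J1 J2 J3 i))"
    by (intro sum.cong) (auto simp: Ei_def)
  finally show ?thesis
    by (simp add: atMost_3_nat)
qed

theorem proposition2p1:
  fixes V :: "'v set" and E :: "'e set" and ends :: "'e \<Rightarrow> 'v set"
    and J1 J2 J3 :: "'e set"
  assumes "cubic V E ends"
    and "is_join V E ends J1" and "is_join V E ends J2" and "is_join V E ends J3"
  shows "card (Ei E J1 J2 J3 0) + (nJ V ends J1 + nJ V ends J2 + nJ V ends J3)
         = card (Ei E J1 J2 J3 2) + 2 * card (Ei E J1 J2 J3 3)"
proof -
  have "finite E" and "J1 \<subseteq> E" "J2 \<subseteq> E" "J3 \<subseteq> E"
    using assms by (auto simp: cubic_def multigraph_def is_join_def)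
  then show ?thesis
    using cubic_card_edges[OF assms(1)]
      card_join_cubic[OF assms(1,2)] card_join_cubic[OF assms(1,3)] card_join_cubic[OF assms(1,4)]
      card_eq_sum_card_Ei[OF \<open>finite E\<close>, of J1 J2 J3]
      sum_card_joins_eq_sum_card_Ei[OF \<open>finite E\<close> \<open>J1 \<subseteq> E\<close> \<open>J2 \<subseteq> E\<close> \<open>J3 \<subseteq> E\<close>]
    by linarith
qed

end
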